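(* Let $S$ be a semigroup with finite $\mathcal{R}$-height, let $a\in S$, and let $A=aS^1$. Let $I$ be a set with $|I|\geq 2$, fix $1\in I$, let $T=\mathcal{B}(S,I)$ be the Brandt extension of $S$ by $I$, and let $B=(1,a,1)T^1$. Then $\mathrm{H}_{\mathcal{R}}(T)=\mathrm{H}_{\mathcal{R}}(S)+1$ and $\mathrm{H}_{\mathcal{R}}(B)=\mathrm{H}_{\mathcal{R}}(A)+2$.
   Context: The Brandt extension $\mathcal{B}(S,I)$ of a semigroup $S$ by a non-empty set $I$ is the set $(I\times S\times I)\cup\{0\}$ with multiplication $(i,s,j)(k,t,l)=(i,st,l)$ if $j=k$ and $=0$ otherwise, and $0x=x0=0$ for all $x$. $S^1$ denotes $S$ with an identity adjoined if necessary. Green's preorder: $u\leq_{\mathcal{R}} v$ iff $uS^1\subseteq vS^1$; $\mathcal{R}$ is the associated equivalence; the $\mathcal{R}$-height $\mathrm{H}_{\mathcal{R}}$ of a semigroup is the supremum of cardinalities of chains in its poset of $\mathcal{R}$-classes. For the right ideals $A$ and $B$, the $\mathcal{R}$-height is computed in $A$ and $B$ as semigroups in their own right. *)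

theory Defs
  imports "HOL-Library.Extended_Nat"
begin

definition semigroup_on :: "'a set \<Rightarrow> ('a \<Rightarrow> 'a \<Rightarrow> 'a) \<Rightarrow> bool" where
  "semigroup_on S f \<longleftrightarrow>
     (\<forall>x\<in>S. \<forall>y\<in>S. f x y \<in> S) \<and>
     (\<forall>x\<in>S. \<forall>y\<in>S. \<forall>z\<in>S. f (f x y) z = f x (f y z))"

definition rideal1 :: "'a set \<Rightarrow> ('a \<Rightarrow> 'a \<Rightarrow> 'a) \<Rightarrow> 'a \<Rightarrow> 'a set" where
  "rideal1 S f u = insert u {f u x | x. x \<in> S}"

definition R_le :: "'a set \<Rightarrow> ('a \<Rightarrow> 'a \<Rightarrow> 'a) \<Rightarrow> 'a \<Rightarrow> 'a \<Rightarrow> bool" where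
  "R_le S f u v \<longleftrightarrow> rideal1 S f u \<subseteq> rideal1 S f v"

definition R_equiv :: "'a set \<Rightarrow> ('a \<Rightarrow> 'a \<Rightarrow> 'a) \<Rightarrow> 'a \<Rightarrow> 'a \<Rightarrow> bool" where
  "R_equiv S f u v \<longleftrightarrow> R_le S f u v \<and> R_le S f v u"

definition R_class :: "'a set \<Rightarrow> ('a \<Rightarrow> 'a \<Rightarrow> 'a) \<Rightarrow> 'a \<Rightarrow> 'a set" where
  "R_class S f u = {v \<in> S. R_equiv S f u v}"

definition R_classes :: "'a set \<Rightarrow> ('a \<Rightarrow> 'a \<Rightarrow> 'a) \<Rightarrow> 'a set set" where
  "R_classes S f = R_class S f ` S"

definition R_class_le :: "'a set \<Rightarrow> ('a \<Rightarrow> 'a \<Rightarrow> 'a) \<Rightarrow> 'a set \<Rightarrow> 'a set \<Rightarrow> bool" where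
  "R_class_le S f P Q \<longleftrightarrow> (\<exists>p\<in>P. \<exists>q\<in>Q. R_le S f p q)"

definition R_chains :: "'a set \<Rightarrow> ('a \<Rightarrow> 'a \<Rightarrow> 'a) \<Rightarrow> 'a set set set" where
  "R_chains S f = {K. K \<subseteq> R_classes S f \<and>
      (\<forall>P\<in>K. \<forall>Q\<in>K. R_class_le S f P Q \<or> R_class_le S f Q P)}"

definition R_height :: "'a set \<Rightarrow> ('a \<Rightarrow> 'a \<Rightarrow> 'a) \<Rightarrow> enat" where
  "R_height S f = (SUP K \<in> R_chains S f. if finite K then enat (card K) else \<infinity>)"

text \<open>Brandt extension B(S,I): elements Some (i,s,j) with i,j in I, s in S, and None as zero.\<close>

definition brandt_carrier :: "'a set \<Rightarrow> 'i set \<Rightarrow> ('i \<times> 'a \<times> 'i) option set" where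
  "brandt_carrier S I = insert None {Some (i, s, j) | i s j. i \<in> I \<and> s \<in> S \<and> j \<in> I}"

fun brandt_mult :: "('a \<Rightarrow> 'a \<Rightarrow> 'a) \<Rightarrow> ('i \<times> 'a \<times> 'i) option \<Rightarrow> ('i \<times> 'a \<times> 'i) option
    \<Rightarrow> ('i \<times> 'a \<times> 'i) option" where
  "brandt_mult f (Some (i, s, j)) (Some (k, t, l)) =
     (if j = k then Some (i, f s t, l) else None)"
| "brandt_mult f _ _ = None"

end

theory Submission
  imports Defs
begin

text \<open>
  Chains of \<open>R\<close>-classes correspond to chains of pairwise non-\<open>R\<close>-equivalent elements, which
  are easier to move between semigroups. In the Brandt extension \<open>T\<close>, zero lies below everything
  and a nonzero \<open>(i,s,j)\<close> lies \<open>R\<close>-below \<open>(k,t,l)\<close> only if \<open>i = k\<close> and \<open>s \<in> tS\<^sup>1\<close>. So deleting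
  zero and projecting to the middle entry turns a chain of \<open>T\<close> into a chain of \<open>S\<close> of one
  element less, while a chain of \<open>S\<close> copied onto the diagonal at a fixed index and extended by
  zero gives the reverse bound.

  In \<open>B = (1,a,1)T\<^sup>1\<close> an element \<open>(1,s,l)\<close> with \<open>l \<noteq> 1\<close> lies above zero only, so a chain of \<open>B\<close>
  consists of zero, at most one such element, and diagonal elements \<open>(1,s,1)\<close>, which are ordered
  as \<open>s\<close> is in \<open>A\<close>; hence \<open>H(B) \<le> H(A) + 2\<close>. Conversely, the least element \<open>m\<close> of a longest
  chain of \<open>A\<close> cannot lie strictly above \<open>ma\<close>, so \<open>m = m(au)\<close> for some \<open>u\<close>. Then \<open>(1,m,j)\<close> with
  \<open>j \<noteq> 1\<close> lies strictly between zero and every diagonal copy of that chain.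
\<close>

section \<open>Heights of preorders\<close>

definition strict_chains :: "'a set \<Rightarrow> ('a \<Rightarrow> 'a \<Rightarrow> bool) \<Rightarrow> 'a set set" where
  "strict_chains X le = {C. C \<subseteq> X \<and>
     (\<forall>x\<in>C. \<forall>y\<in>C. x \<noteq> y \<longrightarrow> (le x y \<or> le y x) \<and> \<not> (le x y \<and> le y x))}"

definition ecard :: "'a set \<Rightarrow> enat" where
  "ecard C = (if finite C then enat (card C) else \<infinity>)"

definition height :: "'a set \<Rightarrow> ('a \<Rightarrow> 'a \<Rightarrow> bool) \<Rightarrow> enat" where
  "height X le = (SUP C \<in> strict_chains X le. ecard C)"

lemma ecard_image: "inj_on h C \<Longrightarrow> ecard (h ` C) = ecard C"
  unfolding ecard_def by (simp add: card_image finite_image_iff)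

lemma ecard_insert: "b \<notin> C \<Longrightarrow> ecard (insert b C) = ecard C + 1"
  unfolding ecard_def by (simp add: eSuc_enat[symmetric] plus_1_eSuc)

lemma ecard_le_Diff_singleton: "ecard C \<le> ecard (C - {b}) + 1"
proof (cases "b \<in> C")
  case True
  then have "ecard C = ecard (insert b (C - {b}))" by (simp add: insert_absorb)
  also have "\<dots> = ecard (C - {b}) + 1" by (rule ecard_insert) simp
  finally show ?thesis by simp
qed simp

lemma ecard_le_height: "C \<in> strict_chains X le \<Longrightarrow> ecard C \<le> height X le"
  unfolding height_def by (rule SUP_upper)

lemma empty_in_strict_chains: "{} \<in> strict_chains X le"
  unfolding strict_chains_def by simp

lemma strict_chains_subset: "C \<in> strict_chains X le \<Longrightarrow> C' \<subseteq> C \<Longrightarrow> C' \<in> strict_chains X le"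
  unfolding strict_chains_def by blast

lemma strict_chains_insert_bottom:
  assumes "C \<in> strict_chains X le" "b \<in> X" "\<And>y. y \<in> C \<Longrightarrow> le b y \<and> \<not> le y b"
  shows "insert b C \<in> strict_chains X le"
  using assms unfolding strict_chains_def by auto

lemma height_attained:
  assumes "height X le \<noteq> \<infinity>"
  obtains C where "C \<in> strict_chains X le" "ecard C = height X le"
proof -
  let ?V = "ecard ` strict_chains X le"
  have "?V \<noteq> {}" using empty_in_strict_chains by blast
  moreover from this assms have "finite ?V"
    unfolding height_def Sup_enat_def by (auto split: if_splits)
  ultimately have "Sup ?V \<in> ?V" unfolding Sup_enat_def by (simp add: Max_in)
  then show ?thesis using that unfolding height_def by auto
qed

lemma height_plus_one_le:
  assumes "\<And>C. C \<in> strict_chains X le \<Longrightarrow> ecard C + 1 \<le> H"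
  shows "height X le + 1 \<le> H"
proof -
  have "height X le + 1 = (SUP C \<in> strict_chains X le. ecard C + 1)"
    using eSuc_Sup[of "ecard ` strict_chains X le"] empty_in_strict_chains
    unfolding height_def plus_1_eSuc image_image by auto
  also have "\<dots> \<le> H" using assms by (rule SUP_least)
  finally show ?thesis .
qed

lemma strict_chains_image:
  assumes C: "C \<in> strict_chains X le" and "h ` C \<subseteq> Y" and "reflp le'"
    and mono: "\<And>x y. x \<in> C \<Longrightarrow> y \<in> C \<Longrightarrow> le x y \<Longrightarrow> \<not> le y x \<Longrightarrow>
                      le' (h x) (h y) \<and> \<not> le' (h y) (h x)"
  shows "h ` C \<in> strict_chains Y le'" and "ecard (h ` C) = ecard C"
proof -
  have strict: "(le' (h x) (h y) \<and> \<not> le' (h y) (h x)) \<or> (le' (h y) (h x) \<and> \<not> le' (h x) (h y))"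
    if "x \<in> C" "y \<in> C" "x \<noteq> y" for x y
    using C mono that unfolding strict_chains_def by blast
  then show "h ` C \<in> strict_chains Y le'"
    using \<open>h ` C \<subseteq> Y\<close> unfolding strict_chains_def by blast
  have "inj_on h C"
  proof (rule inj_onI)
    fix x y assume "x \<in> C" "y \<in> C" "h x = h y"
    with strict[of x y] reflpD[OF \<open>reflp le'\<close>, of "h x"] show "x = y" by auto
  qed
  then show "ecard (h ` C) = ecard C" by (rule ecard_image)
qed

lemma ecard_le_height_image:
  assumes "C \<in> strict_chains X le" "h ` C \<subseteq> Y" "reflp le'"
    and "\<And>x y. x \<in> C \<Longrightarrow> y \<in> C \<Longrightarrow> le x y \<Longrightarrow> \<not> le y x \<Longrightarrow>
                 le' (h x) (h y) \<and> \<not> le' (h y) (h x)"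
  shows "ecard C \<le> height Y le'"
proof -
  have "ecard C = ecard (h ` C)" using strict_chains_image(2)[OF assms] ..
  also have "\<dots> \<le> height Y le'" using strict_chains_image(1)[OF assms] by (rule ecard_le_height)
  finally show ?thesis .
qed

lemma height_plus_one_le_embedding:
  assumes "h ` X \<subseteq> Y" "reflp le'" "b \<in> Y"
    and mono: "\<And>x y. x \<in> X \<Longrightarrow> y \<in> X \<Longrightarrow> le x y \<Longrightarrow> \<not> le y x \<Longrightarrow>
                      le' (h x) (h y) \<and> \<not> le' (h y) (h x)"
    and bottom: "\<And>x. x \<in> X \<Longrightarrow> le' b (h x) \<and> \<not> le' (h x) b"
  shows "height X le + 1 \<le> height Y le'"
proof (rule height_plus_one_le)
  fix C assume C: "C \<in> strict_chains X le"
  then have CX: "C \<subseteq> X" unfolding strict_chains_def by blast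
  then have "h ` C \<subseteq> Y" using assms(1) by blast
  note hC = strict_chains_image[OF C this \<open>reflp le'\<close> mono[OF subsetD[OF CX] subsetD[OF CX]]]
  have "b \<notin> h ` C"
  proof
    assume "b \<in> h ` C"
    then obtain x where "x \<in> C" "b = h x" by blast
    with bottom CX reflpD[OF \<open>reflp le'\<close>, of b] show False by blast
  qed
  then have "ecard C + 1 = ecard (insert b (h ` C))" by (simp add: ecard_insert hC(2))
  also have "\<dots> \<le> height Y le'"
    using strict_chains_insert_bottom[OF hC(1) \<open>b \<in> Y\<close>] bottom CX
    by (blast intro: ecard_le_height)
  finally show "ecard C + 1 \<le> height Y le'" .
qed

lemma strict_chain_has_least:
  assumes C: "C \<in> strict_chains X le" and "finite C" "C \<noteq> {}" "reflp le" "transp le"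
  obtains m where "m \<in> C" "\<And>c. c \<in> C \<Longrightarrow> le m c"
proof -
  have total: "le x y \<or> le y x" if "x \<in> C" "y \<in> C" for x y
  proof (cases "x = y")
    case True then show ?thesis using \<open>reflp le\<close> by (simp add: reflpD)
  next
    case False with C that show ?thesis unfolding strict_chains_def by blast
  qed
  from \<open>finite C\<close> \<open>C \<noteq> {}\<close> total have "\<exists>m\<in>C. \<forall>c\<in>C. le m c"
  proof (induction C rule: finite_ne_induct)
    case (singleton x) then show ?case using \<open>reflp le\<close> by (simp add: reflpD)
  next
    case (insert x F)
    then obtain m where m: "m \<in> F" "\<forall>c\<in>F. le m c" by auto
    show ?case
    proof (cases "le x m")
      case True
      then have "\<forall>c\<in>F. le x c" using m \<open>transp le\<close> by (blast dest: transpD)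
      then show ?thesis using \<open>reflp le\<close> by (simp add: reflpD)
    next
      case False
      then have "le m x" using insert.prems m(1) by blast
      then show ?thesis using m by blast
    qed
  qed
  then show ?thesis using that by blast
qed

lemma maximum_strict_chain_has_least:
  assumes fin: "height X le \<noteq> \<infinity>" and "X \<noteq> {}" "reflp le" "transp le"
  obtains C m where "C \<in> strict_chains X le" "ecard C = height X le"
    "m \<in> C" "\<And>c. c \<in> C \<Longrightarrow> le m c"
proof -
  obtain C where C: "C \<in> strict_chains X le" "ecard C = height X le"
    using height_attained[OF fin] .
  obtain x where "x \<in> X" using \<open>X \<noteq> {}\<close> by blast
  then have "{x} \<in> strict_chains X le" unfolding strict_chains_def by simp
  then have "ecard {x} \<le> ecard C" using ecard_le_height C(2) by metis
  then have "C \<noteq> {}" unfolding ecard_def by auto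
  moreover have "finite C" using C(2) fin unfolding ecard_def by (auto split: if_splits)
  ultimately obtain m where "m \<in> C" "\<And>c. c \<in> C \<Longrightarrow> le m c"
    using strict_chain_has_least[OF C(1) _ _ \<open>reflp le\<close> \<open>transp le\<close>] by blast
  with C show ?thesis by (rule that)
qed

section \<open>Green's \<open>R\<close>-order\<close>

lemma reflp_R_le: "reflp (R_le X f)"
  unfolding R_le_def by (simp add: reflpI)

lemma transp_R_le: "transp (R_le X f)"
  unfolding R_le_def by (meson order_trans transpI)

lemma R_le_iff:
  assumes sg: "semigroup_on X f" and "v \<in> X"
  shows "R_le X f u v \<longleftrightarrow> u = v \<or> (\<exists>x\<in>X. u = f v x)"
proof
  assume "R_le X f u v"
  then show "u = v \<or> (\<exists>x\<in>X. u = f v x)" unfolding R_le_def rideal1_def by auto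
next
  assume "u = v \<or> (\<exists>x\<in>X. u = f v x)"
  then consider "u = v" | x where "x \<in> X" "u = f v x" by blast
  then show "R_le X f u v"
  proof cases
    case (2 x)
    have "f u y = f v (f x y) \<and> f x y \<in> X" if "y \<in> X" for y
      using sg \<open>v \<in> X\<close> \<open>x \<in> X\<close> that 2 unfolding semigroup_on_def by auto
    with 2 show ?thesis unfolding R_le_def rideal1_def by blast
  qed (simp add: R_le_def)
qed

lemma rideal1_subset: "semigroup_on X f \<Longrightarrow> u \<in> X \<Longrightarrow> rideal1 X f u \<subseteq> X"
  unfolding rideal1_def semigroup_on_def by auto

lemma semigroup_on_rideal1:
  assumes sg: "semigroup_on X f" and "u \<in> X"
  shows "semigroup_on (rideal1 X f u) f"
proof -
  have "f x y \<in> rideal1 X f u" if x: "x \<in> rideal1 X f u" and "y \<in> X" for x y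
  proof (cases "x = u")
    case False
    then obtain z where "z \<in> X" "x = f u z" using x unfolding rideal1_def by blast
    with sg \<open>u \<in> X\<close> \<open>y \<in> X\<close> have "f x y = f u (f z y)" "f z y \<in> X"
      unfolding semigroup_on_def by auto
    then show ?thesis unfolding rideal1_def by blast
  qed (use \<open>y \<in> X\<close> in \<open>auto simp: rideal1_def\<close>)
  moreover note rideal1_subset[OF assms]
  ultimately show ?thesis using sg unfolding semigroup_on_def by (meson subsetD)
qed

lemma R_class_eq: "R_class S f u = {v \<in> S. rideal1 S f v = rideal1 S f u}"
  unfolding R_class_def R_equiv_def R_le_def by auto

lemma R_class_eq_iff:
  "u \<in> S \<Longrightarrow> v \<in> S \<Longrightarrow> R_class S f u = R_class S f v \<longleftrightarrow> R_le S f u v \<and> R_le S f v u"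
  unfolding R_class_eq R_le_def by blast

lemma R_class_le_R_class_iff:
  "u \<in> S \<Longrightarrow> v \<in> S \<Longrightarrow> R_class_le S f (R_class S f u) (R_class S f v) \<longleftrightarrow> R_le S f u v"
  unfolding R_class_le_def R_class_eq R_le_def by auto

lemma inj_on_R_class:
  assumes "C \<in> strict_chains S (R_le S f)"
  shows "inj_on (R_class S f) C"
proof (rule inj_onI)
  fix x y assume "x \<in> C" "y \<in> C" "R_class S f x = R_class S f y"
  with assms R_class_eq_iff[of x S y f] show "x = y" unfolding strict_chains_def by blast
qed

lemma R_chains_eq: "R_chains S f = (\<lambda>C. R_class S f ` C) ` strict_chains S (R_le S f)"
proof (intro equalityI subsetI)
  fix K assume K: "K \<in> R_chains S f"
  define r where "r P = (SOME p. p \<in> P)" for P :: "'a set"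
  have r: "r P \<in> S" "R_class S f (r P) = P" if "P \<in> K" for P
  proof -
    from that K obtain u where "u \<in> S" and P: "P = R_class S f u"
      unfolding R_chains_def R_classes_def by auto
    then have "u \<in> P" unfolding R_class_eq by blast
    then have "r P \<in> P" unfolding r_def by (rule someI)
    then show "r P \<in> S" "R_class S f (r P) = P" unfolding P R_class_eq by auto
  qed
  have "(R_le S f x y \<or> R_le S f y x) \<and> \<not> (R_le S f x y \<and> R_le S f y x)"
    if xy: "x \<in> r ` K" "y \<in> r ` K" and "x \<noteq> y" for x y
  proof -
    obtain P Q where PQ: "P \<in> K" "Q \<in> K" "x = r P" "y = r Q" using xy by blast
    with r have x: "x \<in> S" "R_class S f x = P" and y: "y \<in> S" "R_class S f y = Q" by auto
    with \<open>x \<noteq> y\<close> PQ have "P \<noteq> Q" by blast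
    then have "R_class_le S f P Q \<or> R_class_le S f Q P" using K PQ unfolding R_chains_def by blast
    then have "R_le S f x y \<or> R_le S f y x"
      unfolding x(2)[symmetric] y(2)[symmetric] R_class_le_R_class_iff[OF x(1) y(1)]
        R_class_le_R_class_iff[OF y(1) x(1)] .
    moreover have "\<not> (R_le S f x y \<and> R_le S f y x)"
      using \<open>P \<noteq> Q\<close> unfolding x(2)[symmetric] y(2)[symmetric] R_class_eq_iff[OF x(1) y(1)] .
    ultimately show ?thesis by blast
  qed
  moreover have "r ` K \<subseteq> S" using r by blast
  ultimately have "r ` K \<in> strict_chains S (R_le S f)" unfolding strict_chains_def by blast
  moreover have "R_class S f ` r ` K = K" using r(2) by force
  ultimately show "K \<in> (\<lambda>C. R_class S f ` C) ` strict_chains S (R_le S f)" by blast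
next
  fix K assume "K \<in> (\<lambda>C. R_class S f ` C) ` strict_chains S (R_le S f)"
  then obtain C where C: "C \<in> strict_chains S (R_le S f)" "K = R_class S f ` C" by blast
  then have "C \<subseteq> S" unfolding strict_chains_def by blast
  have "R_class_le S f P Q \<or> R_class_le S f Q P" if "P \<in> K" "Q \<in> K" for P Q
  proof -
    obtain x y where xy: "x \<in> C" "y \<in> C" "P = R_class S f x" "Q = R_class S f y"
      using C(2) \<open>P \<in> K\<close> \<open>Q \<in> K\<close> by blast
    have "R_le S f x y \<or> R_le S f y x"
    proof (cases "x = y")
      case True then show ?thesis using reflp_R_le by (metis reflpD)
    next
      case False with C(1) xy(1,2) show ?thesis unfolding strict_chains_def by blast
    qed
    moreover have "x \<in> S" "y \<in> S" using xy(1,2) \<open>C \<subseteq> S\<close> by auto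
    ultimately show ?thesis unfolding xy(3,4) by (simp add: R_class_le_R_class_iff)
  qed
  moreover have "K \<subseteq> R_classes S f" unfolding R_classes_def C(2) using \<open>C \<subseteq> S\<close> by blast
  ultimately show "K \<in> R_chains S f" unfolding R_chains_def by blast
qed

lemma R_height_eq_height: "R_height S f = height S (R_le S f)"
proof -
  have "R_height S f = (SUP C \<in> strict_chains S (R_le S f). ecard (R_class S f ` C))"
    unfolding R_height_def R_chains_eq ecard_def[symmetric] image_image ..
  also have "\<dots> = height S (R_le S f)"
    unfolding height_def by (rule SUP_cong) (simp_all add: ecard_image inj_on_R_class)
  finally show ?thesis .
qed

lemma R_le_mult_of_least_in_maximum_chain:
  assumes sg: "semigroup_on X f"
    and C: "C \<in> strict_chains X (R_le X f)" "ecard C = height X (R_le X f)"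
      "height X (R_le X f) \<noteq> \<infinity>"
    and m: "m \<in> C" "\<And>c. c \<in> C \<Longrightarrow> R_le X f m c" and "x \<in> X"
  shows "R_le X f m (f m x)"
proof (rule ccontr)
  assume not_above: "\<not> R_le X f m (f m x)"
  have "m \<in> X" using C(1) m(1) unfolding strict_chains_def by blast
  then have mx: "f m x \<in> X" "R_le X f (f m x) m"
    using sg \<open>x \<in> X\<close> R_le_iff[OF sg] unfolding semigroup_on_def by blast+
  have "R_le X f (f m x) c \<and> \<not> R_le X f c (f m x)" if "c \<in> C" for c
    using mx(2) m(2)[OF that] not_above transp_R_le by (metis transpD)
  then have "insert (f m x) C \<in> strict_chains X (R_le X f)"
    using strict_chains_insert_bottom[OF C(1) mx(1)] by blast
  moreover have "f m x \<notin> C" using m(2) not_above by blast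
  ultimately have "ecard C + 1 \<le> ecard C"
    using ecard_le_height C(2) by (metis ecard_insert)
  with C(2,3) show False by (cases "ecard C") auto
qed

section \<open>Brandt extensions\<close>

definition brandt_middle :: "('i \<times> 'a \<times> 'i) option \<Rightarrow> 'a" where
  "brandt_middle x = fst (snd (the x))"

lemma brandt_middle_Some [simp]: "brandt_middle (Some (i, s, j)) = s"
  unfolding brandt_middle_def by simp

lemma brandt_mult_None_right [simp]: "brandt_mult f x None = None"
  by (cases x) auto

lemma None_R_less:
  assumes "None \<in> X" "y \<in> X" "y \<noteq> None"
  shows "R_le X (brandt_mult f) None y \<and> \<not> R_le X (brandt_mult f) y None"
  using assms unfolding R_le_def rideal1_def by (auto intro!: exI[of _ None])

locale brandt =
  fixes S :: "'a set" and f :: "'a \<Rightarrow> 'a \<Rightarrow> 'a" and I :: "'i set"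
  assumes semigroup: "semigroup_on S f"
begin

abbreviation T :: "('i \<times> 'a \<times> 'i) option set" where
  "T \<equiv> brandt_carrier S I"

lemma closed: "s \<in> S \<Longrightarrow> t \<in> S \<Longrightarrow> f s t \<in> S"
  using semigroup unfolding semigroup_on_def by blast

lemma assoc: "s \<in> S \<Longrightarrow> t \<in> S \<Longrightarrow> u \<in> S \<Longrightarrow> f (f s t) u = f s (f t u)"
  using semigroup unfolding semigroup_on_def by blast

lemma None_in_T [simp]: "None \<in> T"
  unfolding brandt_carrier_def by simp

lemma Some_in_T_iff [simp]: "Some (i, s, j) \<in> T \<longleftrightarrow> i \<in> I \<and> s \<in> S \<and> j \<in> I"
  unfolding brandt_carrier_def by simp

lemma T_cases:
  assumes "x \<in> T"
  obtains "x = None" | i s j where "x = Some (i, s, j)" "i \<in> I" "s \<in> S" "j \<in> I"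
  using assms unfolding brandt_carrier_def by blast

lemma semigroup_on_T: "semigroup_on T (brandt_mult f)"
proof -
  have "brandt_mult f x y \<in> T" if "x \<in> T" "y \<in> T" for x y
    using that by (elim T_cases) (auto simp: closed)
  moreover have "brandt_mult f (brandt_mult f x y) z = brandt_mult f x (brandt_mult f y z)"
    if "x \<in> T" "y \<in> T" "z \<in> T" for x y z
    using that by (elim T_cases) (auto simp: assoc closed)
  ultimately show ?thesis unfolding semigroup_on_def by blast
qed

lemma R_le_T_Some_iff:
  assumes "j \<in> I" and y: "Some (k, t, l) \<in> T"
  shows "R_le T (brandt_mult f) (Some (i, s, j)) (Some (k, t, l)) \<longleftrightarrow>
           (i, s, j) = (k, t, l) \<or> (i = k \<and> (\<exists>u\<in>S. s = f t u))"
proof -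
  have "(\<exists>z\<in>T. Some (i, s, j) = brandt_mult f (Some (k, t, l)) z) \<longleftrightarrow> i = k \<and> (\<exists>u\<in>S. s = f t u)"
  proof
    assume "\<exists>z\<in>T. Some (i, s, j) = brandt_mult f (Some (k, t, l)) z"
    then obtain z where "z \<in> T" "Some (i, s, j) = brandt_mult f (Some (k, t, l)) z" by blast
    then show "i = k \<and> (\<exists>u\<in>S. s = f t u)" by (elim T_cases) (auto split: if_splits)
  next
    assume "i = k \<and> (\<exists>u\<in>S. s = f t u)"
    with y \<open>j \<in> I\<close> show "\<exists>z\<in>T. Some (i, s, j) = brandt_mult f (Some (k, t, l)) z"
      by (auto intro!: bexI[of _ "Some (l, _, j)"])
  qed
  then show ?thesis using R_le_iff[OF semigroup_on_T y] by auto
qed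

lemma R_le_T_diag_iff:
  "i \<in> I \<Longrightarrow> s \<in> S \<Longrightarrow> t \<in> S \<Longrightarrow>
     R_le T (brandt_mult f) (Some (i, s, i)) (Some (i, t, i)) \<longleftrightarrow> R_le S f s t"
  by (simp add: R_le_T_Some_iff R_le_iff[OF semigroup])

lemma height_T_le: "height T (R_le T (brandt_mult f)) \<le> height S (R_le S f) + 1"
  unfolding height_def[of T]
proof (rule SUP_least)
  fix D assume D: "D \<in> strict_chains T (R_le T (brandt_mult f))"
  have D': "D - {None} \<in> strict_chains T (R_le T (brandt_mult f))"
    using strict_chains_subset[OF D] by blast
  have nonzero: "\<exists>i s j. x = Some (i, s, j) \<and> i \<in> I \<and> s \<in> S \<and> j \<in> I" if "x \<in> D - {None}" for x
    using that D unfolding strict_chains_def by (auto elim: T_cases)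
  have "ecard (D - {None}) \<le> height S (R_le S f)"
  proof (rule ecard_le_height_image[OF D' _ reflp_R_le])
    show "brandt_middle ` (D - {None}) \<subseteq> S" using nonzero by force
    fix x y
    assume "x \<in> D - {None}" "y \<in> D - {None}"
      and xy: "R_le T (brandt_mult f) x y" "\<not> R_le T (brandt_mult f) y x"
    then obtain i s j k t l where x: "x = Some (i, s, j)" "i \<in> I" "s \<in> S" "j \<in> I"
      and y: "y = Some (k, t, l)" "k \<in> I" "t \<in> S" "l \<in> I" using nonzero by meson
    from xy x y have "i = k" "\<exists>u\<in>S. s = f t u" "\<not> (\<exists>u\<in>S. t = f s u)"
      by (auto simp: R_le_T_Some_iff)
    then show "R_le S f (brandt_middle x) (brandt_middle y) \<and>
            \<not> R_le S f (brandt_middle y) (brandt_middle x)"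
      using x y by (auto simp: R_le_iff[OF semigroup])
  qed
  then show "ecard D \<le> height S (R_le S f) + 1"
    using ecard_le_Diff_singleton[of D None] by (meson add_right_mono order_trans)
qed

lemma height_T_ge:
  assumes "i \<in> I"
  shows "height S (R_le S f) + 1 \<le> height T (R_le T (brandt_mult f))"
  by (rule height_plus_one_le_embedding[where h = "\<lambda>s. Some (i, s, i)" and b = None])
    (use assms in \<open>auto simp: reflp_R_le R_le_T_diag_iff None_R_less\<close>)

lemma height_T: "I \<noteq> {} \<Longrightarrow> height T (R_le T (brandt_mult f)) = height S (R_le S f) + 1"
  using height_T_le height_T_ge by (blast intro: order.antisym)

end

section \<open>The principal right ideal generated by a diagonal element\<close>

locale brandt_principal = brandt +
  fixes i and a
  assumes i: "i \<in> I" and a: "a \<in> S"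
begin

abbreviation A where
  "A \<equiv> rideal1 S f a"

abbreviation B where
  "B \<equiv> rideal1 T (brandt_mult f) (Some (i, a, i))"

lemma A_subset: "A \<subseteq> S"
  using rideal1_subset[OF semigroup a] .

lemma semigroup_on_A: "semigroup_on A f"
  using semigroup_on_rideal1[OF semigroup a] .

lemma generator_in_T: "Some (i, a, i) \<in> T"
  using i a by simp

lemma semigroup_on_B: "semigroup_on B (brandt_mult f)"
  using semigroup_on_rideal1[OF semigroup_on_T generator_in_T] .

lemma B_cases:
  assumes "x \<in> B"
  obtains "x = None" | s l where "x = Some (i, s, l)" "s \<in> A" "l \<in> I"
proof -
  from assms consider "x = Some (i, a, i)" | z where "z \<in> T" "x = brandt_mult f (Some (i, a, i)) z"
    unfolding rideal1_def by blast
  then show ?thesis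
  proof cases
    case 1 with that i show ?thesis unfolding rideal1_def by blast
  next
    case (2 z) with that show ?thesis unfolding rideal1_def
      by (elim T_cases) (auto split: if_splits)
  qed
qed

lemma mem_BI: "t \<in> S \<Longrightarrow> l \<in> I \<Longrightarrow> Some (i, f a t, l) \<in> B"
proof -
  assume "t \<in> S" "l \<in> I"
  then have "Some (i, t, l) \<in> T" using i by simp
  moreover have "Some (i, f a t, l) = brandt_mult f (Some (i, a, i)) (Some (i, t, l))" by simp
  ultimately show ?thesis unfolding rideal1_def by blast
qed

lemma None_in_B: "None \<in> B"
proof -
  have "None = brandt_mult f (Some (i, a, i)) None" by simp
  then show ?thesis unfolding rideal1_def using None_in_T by blast
qed

lemma diag_in_B: "s \<in> A \<Longrightarrow> Some (i, s, i) \<in> B"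
  using mem_BI i by (auto simp: rideal1_def)

lemma mult_A_in_B:
  assumes "v \<in> A" "u \<in> S" "l \<in> I"
  shows "Some (i, f v u, l) \<in> B"
proof -
  obtain t where "t \<in> S" "f v u = f a t"
    using assms(1,2) a assoc closed unfolding rideal1_def by blast
  with mem_BI \<open>l \<in> I\<close> show ?thesis by metis
qed

lemma R_le_B_diag_iff:
  assumes "s \<in> A" "t \<in> A"
  shows "R_le B (brandt_mult f) (Some (i, s, i)) (Some (i, t, i)) \<longleftrightarrow> R_le A f s t"
proof -
  have "(\<exists>z\<in>B. Some (i, s, i) = brandt_mult f (Some (i, t, i)) z) \<longleftrightarrow> (\<exists>u\<in>A. s = f t u)"
  proof
    assume "\<exists>z\<in>B. Some (i, s, i) = brandt_mult f (Some (i, t, i)) z"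
    then obtain z where "z \<in> B" "Some (i, s, i) = brandt_mult f (Some (i, t, i)) z" by blast
    then show "\<exists>u\<in>A. s = f t u" by (elim B_cases) (auto split: if_splits)
  next
    assume "\<exists>u\<in>A. s = f t u"
    then show "\<exists>z\<in>B. Some (i, s, i) = brandt_mult f (Some (i, t, i)) z"
      using diag_in_B by force
  qed
  then show ?thesis
    using R_le_iff[OF semigroup_on_B diag_in_B[OF \<open>t \<in> A\<close>]] R_le_iff[OF semigroup_on_A \<open>t \<in> A\<close>]
    by auto
qed

lemma R_le_B_off_diag_iff:
  assumes "Some (i, s, l) \<in> B" "l \<noteq> i"
  shows "R_le B (brandt_mult f) y (Some (i, s, l)) \<longleftrightarrow> y = Some (i, s, l) \<or> y = None"
proof -
  have "(\<exists>z\<in>B. y = brandt_mult f (Some (i, s, l)) z) \<longleftrightarrow> y = None"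
  proof
    assume "\<exists>z\<in>B. y = brandt_mult f (Some (i, s, l)) z"
    then show "y = None" using \<open>l \<noteq> i\<close> by (auto elim: B_cases)
  next
    assume "y = None"
    then have "y = brandt_mult f (Some (i, s, l)) None" by simp
    then show "\<exists>z\<in>B. y = brandt_mult f (Some (i, s, l)) z" using None_in_B by blast
  qed
  then show ?thesis using R_le_iff[OF semigroup_on_B assms(1)] by auto
qed

lemma height_B_le: "height B (R_le B (brandt_mult f)) \<le> height A (R_le A f) + 2"
  unfolding height_def[of B]
proof (rule SUP_least)
  fix D assume D: "D \<in> strict_chains B (R_le B (brandt_mult f))"
  then have "D \<subseteq> B" unfolding strict_chains_def by blast
  obtain e where diag: "\<And>x. x \<in> D - {None} - {e} \<Longrightarrow> \<exists>s\<in>A. x = Some (i, s, i)"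
  proof (cases "\<exists>s l. Some (i, s, l) \<in> D \<and> l \<noteq> i")
    case True
    then obtain s l where e: "Some (i, s, l) \<in> D" "l \<noteq> i" by blast
    have "\<exists>t\<in>A. x = Some (i, t, i)" if x: "x \<in> D - {None} - {Some (i, s, l)}" for x
    proof -
      from x \<open>D \<subseteq> B\<close> obtain t k where t: "x = Some (i, t, k)" "t \<in> A" by (auto elim: B_cases)
      have "k = i"
      proof (rule ccontr)
        assume "k \<noteq> i"
        with x t e \<open>D \<subseteq> B\<close> have "\<not> R_le B (brandt_mult f) x (Some (i, s, l))"
          "\<not> R_le B (brandt_mult f) (Some (i, s, l)) x"
          by (auto simp: R_le_B_off_diag_iff)
        with D x e(1) show False unfolding strict_chains_def by blast
      qed
      with t show ?thesis by blast
    qed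
    then show ?thesis by (rule that)
  next
    case False
    with \<open>D \<subseteq> B\<close> show ?thesis by (intro that[of None]) (auto elim!: B_cases)
  qed
  have "ecard (D - {None} - {e}) \<le> height A (R_le A f)"
  proof (rule ecard_le_height_image[OF strict_chains_subset[OF D] _ reflp_R_le])
    show "brandt_middle ` (D - {None} - {e}) \<subseteq> A" using diag by force
    fix x y
    assume "x \<in> D - {None} - {e}" "y \<in> D - {None} - {e}"
      and xy: "R_le B (brandt_mult f) x y" "\<not> R_le B (brandt_mult f) y x"
    then obtain s t where "s \<in> A" "t \<in> A" "x = Some (i, s, i)" "y = Some (i, t, i)"
      using diag by meson
    with xy show "R_le A f (brandt_middle x) (brandt_middle y) \<and>
            \<not> R_le A f (brandt_middle y) (brandt_middle x)"
      by (simp add: R_le_B_diag_iff)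
  qed blast
  then have "ecard (D - {None} - {e}) + 1 + 1 \<le> height A (R_le A f) + 2"
    by (simp add: add.assoc add_right_mono one_add_one)
  moreover have "ecard D \<le> ecard (D - {None} - {e}) + 1 + 1"
    using ecard_le_Diff_singleton[of D None] ecard_le_Diff_singleton[of "D - {None}" e]
    by (meson add_right_mono order_trans)
  ultimately show "ecard D \<le> height A (R_le A f) + 2" by (rule order_trans[rotated])
qed

lemma height_B_ge_plus_one: "height A (R_le A f) + 1 \<le> height B (R_le B (brandt_mult f))"
proof (rule height_plus_one_le_embedding[where h = "\<lambda>s. Some (i, s, i)" and b = None])
  fix s t assume "s \<in> A" "t \<in> A"
  then show "R_le A f s t \<Longrightarrow> \<not> R_le A f t s \<Longrightarrow>
      R_le B (brandt_mult f) (Some (i, s, i)) (Some (i, t, i)) \<and>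
      \<not> R_le B (brandt_mult f) (Some (i, t, i)) (Some (i, s, i))"
    by (simp add: R_le_B_diag_iff)
qed (auto simp: reflp_R_le diag_in_B None_in_B None_R_less)

lemma off_diag_R_le_diag:
  assumes "c \<in> A" "j \<in> I" "R_le A f m c" "u \<in> S" "m = f m (f a u)"
  shows "R_le B (brandt_mult f) (Some (i, m, j)) (Some (i, c, i))"
proof -
  have "f a u \<in> S" using a \<open>u \<in> S\<close> closed by blast
  from \<open>R_le A f m c\<close> consider "m = c" | v where "v \<in> A" "m = f c v"
    using R_le_iff[OF semigroup_on_A \<open>c \<in> A\<close>] by blast
  then obtain w where w: "Some (i, w, j) \<in> B" "m = f c w"
  proof cases
    case 1
    then show ?thesis using that mem_BI[OF \<open>u \<in> S\<close> \<open>j \<in> I\<close>] assms(5) by blast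
  next
    case (2 v)
    then have "m = f c (f v (f a u))"
      using assms(1,5) \<open>f a u \<in> S\<close> A_subset assoc by (metis subsetD)
    then show ?thesis using that mult_A_in_B[OF \<open>v \<in> A\<close> \<open>f a u \<in> S\<close> \<open>j \<in> I\<close>] by blast
  qed
  then have "Some (i, m, j) = brandt_mult f (Some (i, c, i)) (Some (i, w, j))" by simp
  then show ?thesis
    using w(1) R_le_iff[OF semigroup_on_B diag_in_B[OF \<open>c \<in> A\<close>]] by blast
qed

lemma diag_strict_chains:
  assumes C: "C \<in> strict_chains A (R_le A f)"
  shows "(\<lambda>s. Some (i, s, i)) ` C \<in> strict_chains B (R_le B (brandt_mult f))"
    and "ecard ((\<lambda>s. Some (i, s, i)) ` C) = ecard C"
proof -
  have CA: "C \<subseteq> A" using C unfolding strict_chains_def by blast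
  then have sub: "(\<lambda>s. Some (i, s, i)) ` C \<subseteq> B" using diag_in_B by blast
  have mono: "R_le B (brandt_mult f) (Some (i, s, i)) (Some (i, t, i)) \<and>
      \<not> R_le B (brandt_mult f) (Some (i, t, i)) (Some (i, s, i))"
    if "s \<in> C" "t \<in> C" "R_le A f s t" "\<not> R_le A f t s" for s t
    using that CA R_le_B_diag_iff[of s t] R_le_B_diag_iff[of t s] by blast
  show "(\<lambda>s. Some (i, s, i)) ` C \<in> strict_chains B (R_le B (brandt_mult f))"
    and "ecard ((\<lambda>s. Some (i, s, i)) ` C) = ecard C"
    using strict_chains_image[OF C sub reflp_R_le mono] by blast+
qed

lemma least_of_maximum_chain_absorbs:
  assumes "height A (R_le A f) \<noteq> \<infinity>"
  obtains C m u where "C \<in> strict_chains A (R_le A f)" "ecard C = height A (R_le A f)"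
    "m \<in> C" "\<And>c. c \<in> C \<Longrightarrow> R_le A f m c" "u \<in> S" "m = f m (f a u)"
proof -
  have "a \<in> A" unfolding rideal1_def by simp
  then have "A \<noteq> {}" by blast
  obtain C m where C: "C \<in> strict_chains A (R_le A f)" "ecard C = height A (R_le A f)"
    and m: "m \<in> C" "\<And>c. c \<in> C \<Longrightarrow> R_le A f m c"
    using maximum_strict_chain_has_least[OF assms \<open>A \<noteq> {}\<close> reflp_R_le transp_R_le] by blast
  have "m \<in> A" using C(1) m(1) unfolding strict_chains_def by blast
  then have "m \<in> S" using A_subset by blast
  have "R_le A f m (f m a)"
    using R_le_mult_of_least_in_maximum_chain[OF semigroup_on_A C assms m \<open>a \<in> A\<close>] .
  then consider "m = f m a" | v where "v \<in> A" "m = f (f m a) v"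
    using R_le_iff[OF semigroup_on_A] semigroup_on_A \<open>a \<in> A\<close> \<open>m \<in> A\<close>
    unfolding semigroup_on_def by blast
  then obtain u where u: "u \<in> S" "m = f m (f a u)"
  proof cases
    case 1
    then have "m = f m (f a a)" using assoc a \<open>m \<in> S\<close> by metis
    then show ?thesis using that a by blast
  next
    case (2 v)
    with A_subset have "v \<in> S" by blast
    with 2 have "m = f m (f a v)" using assoc a \<open>m \<in> S\<close> by metis
    then show ?thesis using that \<open>v \<in> S\<close> by blast
  qed
  show ?thesis by (rule that[OF C m u])
qed

lemma height_B_ge:
  assumes j: "j \<in> I" "j \<noteq> i" and fin: "height A (R_le A f) \<noteq> \<infinity>"
  shows "height A (R_le A f) + 2 \<le> height B (R_le B (brandt_mult f))"
proof -
  obtain C m u where C: "C \<in> strict_chains A (R_le A f)" "ecard C = height A (R_le A f)"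
    and m: "m \<in> C" "\<And>c. c \<in> C \<Longrightarrow> R_le A f m c" and u: "u \<in> S" "m = f m (f a u)"
    using least_of_maximum_chain_absorbs[OF fin] by blast
  have CA: "C \<subseteq> A" using C(1) unfolding strict_chains_def by blast
  let ?D = "(\<lambda>s. Some (i, s, i)) ` C"
  define e where "e = Some (i, m, j)"
  have "e \<in> B" using mult_A_in_B[of m "f a u" j] u a closed CA m(1) j unfolding e_def by auto
  have e_below: "R_le B (brandt_mult f) e y \<and> \<not> R_le B (brandt_mult f) y e" if "y \<in> ?D" for y
  proof -
    from \<open>y \<in> ?D\<close> obtain c where c: "c \<in> C" "y = Some (i, c, i)" by blast
    have "R_le B (brandt_mult f) e y"
      using off_diag_R_le_diag[OF subsetD[OF CA c(1)] j(1) m(2)[OF c(1)] u] c(2)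
      unfolding e_def by simp
    moreover have "\<not> R_le B (brandt_mult f) y e"
      using R_le_B_off_diag_iff[OF \<open>e \<in> B\<close>[unfolded e_def] j(2)] c(2) j(2)
      unfolding e_def by simp
    ultimately show ?thesis ..
  qed
  have chain: "insert e ?D \<in> strict_chains B (R_le B (brandt_mult f))"
    using strict_chains_insert_bottom[OF diag_strict_chains(1)[OF C(1)] \<open>e \<in> B\<close> e_below] .
  have "R_le B (brandt_mult f) None y \<and> \<not> R_le B (brandt_mult f) y None"
    if y: "y \<in> insert e ?D" for y
  proof (rule None_R_less[OF None_in_B])
    show "y \<in> B" using chain y unfolding strict_chains_def by blast
    show "y \<noteq> None" using y unfolding e_def by auto
  qed
  with chain have chain': "insert None (insert e ?D) \<in> strict_chains B (R_le B (brandt_mult f))"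
    by (rule strict_chains_insert_bottom[OF _ None_in_B])
  have "e \<notin> ?D" "None \<notin> insert e ?D" using j(2) unfolding e_def by auto
  then have "height A (R_le A f) + 2 = ecard (insert None (insert e ?D))"
    by (simp add: ecard_insert diag_strict_chains(2)[OF C(1)] C(2) add.assoc one_add_one)
  also have "\<dots> \<le> height B (R_le B (brandt_mult f))" using chain' by (rule ecard_le_height)
  finally show ?thesis .
qed

lemma height_B:
  assumes "j \<in> I" "j \<noteq> i"
  shows "height B (R_le B (brandt_mult f)) = height A (R_le A f) + 2"
proof (cases "height A (R_le A f) = \<infinity>")
  case True
  then show ?thesis using height_B_ge_plus_one by simp
next
  case False
  show ?thesis using height_B_le height_B_ge[OF assms False] by (rule order.antisym)
qed

end

theorem theorem4p5:
  fixes S :: "'a set" and f :: "'a \<Rightarrow> 'a \<Rightarrow> 'a" and a :: 'a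
    and I :: "'i set" and i1 :: 'i
  assumes "semigroup_on S f"
    and "R_height S f \<noteq> \<infinity>"
    and "a \<in> S"
    and "i1 \<in> I" and "\<exists>j\<in>I. j \<noteq> i1"
  shows "R_height (brandt_carrier S I) (brandt_mult f) = R_height S f + 1
       \<and> R_height (rideal1 (brandt_carrier S I) (brandt_mult f) (Some (i1, a, i1))) (brandt_mult f)
           = R_height (rideal1 S f a) f + 2"
proof -
  interpret brandt_principal S f I i1 a
    using assms(1,3,4) by unfold_locales
  obtain j where "j \<in> I" "j \<noteq> i1" using assms(5) by blast
  then show ?thesis
    unfolding R_height_eq_height using height_T height_B assms(4) by blast
qed

end
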